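(* Let $p$ be a prime. Then: (1) every integer of the form $p_1^{2p^2-1}$ with $p_1$ prime is $p^2$-$T_0T^\ast$-perfect; (2) if $p$ is odd, every integer of the form $p_1^{(p-1)/2}\cdot p_2^{(p-1)/2}$ with distinct primes $p_1,p_2$ is $p^2$-$T_0T^\ast$-perfect; (3) every integer $n>1$ that is $p^2$-$T_0T^\ast$-perfect is of the form $p_1^{2p^2-1}$ with $p_1$ prime, or (with $p$ odd) of the form $p_1^{(p-1)/2}\cdot p_2^{(p-1)/2}$ with distinct primes $p_1,p_2$.
   Context: For a positive integer $m$, $T(m)$ denotes the product of all positive divisors of $m$, and $T^\ast(m)$ the product of all unitary divisors of $m$ (divisors $d$ with $\gcd(d,m/d)=1$). For an integer $K\ge 2$, an integer $n>1$ is called $K$-$T_0T^\ast$-perfect if $T(T^\ast(n))=n^K$. *)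

theory Defs
  imports "HOL-Computational_Algebra.Primes"
begin

definition divprod :: "nat \<Rightarrow> nat" where
  "divprod m = (\<Prod>d\<in>{d. d dvd m}. d)"

definition udivprod :: "nat \<Rightarrow> nat" where
  "udivprod m = (\<Prod>d\<in>{d. d dvd m \<and> coprime d (m div d)}. d)"

definition K_T0Tstar_perfect :: "nat \<Rightarrow> nat \<Rightarrow> bool" where
  "K_T0Tstar_perfect K n \<longleftrightarrow> 2 \<le> K \<and> 1 < n \<and> divprod (udivprod n) = n ^ K"

end

theory Submission
  imports Defs "HOL-Library.FuncSet"
begin

text \<open>Let \<open>n\<close> have \<open>k\<close> distinct prime factors \<open>q\<close> with exponents \<open>a q\<close>. Divisors of \<open>n\<close> correspond to
  exponent vectors below \<open>a\<close>, and the unitary ones to vectors with each entry \<open>0\<close> or \<open>a q\<close>, so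
  there are \<open>2 ^ k\<close> of them. Pairing each divisor \<open>d\<close> with \<open>n div d\<close> shows \<open>T(m)\<^sup>2 = m ^ \<tau>(m)\<close> and
  \<open>T\<^sup>*(n) = n ^ c\<close> with \<open>c = 2 ^ (k - 1)\<close>, hence \<open>T(T\<^sup>*(n)) = n ^ K\<close> iff
  \<open>c * \<Prod>q. (c * a q + 1) = 2 * K\<close>. For \<open>K = p\<^sup>2\<close>: if \<open>k = 1\<close> the exponent is \<open>2 p\<^sup>2 - 1\<close>; if
  \<open>k = 2\<close> then \<open>(2 a + 1)(2 b + 1) = p\<^sup>2\<close> with both factors nontrivial, so both equal \<open>p\<close>; if
  \<open>k \<ge> 3\<close> then \<open>4\<close> divides \<open>2 p\<^sup>2\<close>, forcing \<open>p = 2\<close>, yet the left side is at least \<open>20 > 8\<close>.\<close>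

lemma prod_square_eq_power_card:
  fixes m :: nat
  assumes "m > 0" "finite S" "\<And>d. d \<in> S \<Longrightarrow> d dvd m" "\<And>d. d \<in> S \<Longrightarrow> m div d \<in> S"
  shows "(\<Prod>d\<in>S. d) ^ 2 = m ^ card S"
proof -
  have "bij_betw (\<lambda>d. m div d) S S"
    by (rule bij_betw_byWitness[where f' = "\<lambda>d. m div d"])
       (use assms in \<open>auto simp: div_div_eq_right\<close>)
  hence "(\<Prod>d\<in>S. m div d) = (\<Prod>d\<in>S. d)"
    using prod.reindex_bij_betw[of _ S S "\<lambda>d. d"] by simp
  hence "(\<Prod>d\<in>S. d) ^ 2 = (\<Prod>d\<in>S. d * (m div d))"
    by (simp add: power2_eq_square prod.distrib)
  also have "\<dots> = (\<Prod>d\<in>S. m)"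
    using assms(3) by (intro prod.cong) auto
  finally show ?thesis by simp
qed

lemma coprime_iff_prime_factors_disjoint:
  fixes a b :: nat
  assumes "a \<noteq> 0" "b \<noteq> 0"
  shows "coprime a b \<longleftrightarrow> prime_factors a \<inter> prime_factors b = {}"
proof -
  have "coprime a b \<longleftrightarrow> prime_factorization (gcd a b) = {#}"
    using assms by (simp add: prime_factorization_empty_iff coprime_iff_gcd_eq_1)
  thus ?thesis using assms by (simp flip: prime_factors_gcd)
qed

lemma multiplicity_div_nat:
  fixes m d q :: nat
  assumes "m > 0" "d dvd m" "prime q"
  shows "multiplicity q (m div d) = multiplicity q m - multiplicity q d"
proof -
  have "d \<noteq> 0" "m div d \<noteq> 0" using assms by (auto elim!: dvdE)
  moreover have "m = d * (m div d)" using assms(2) by simp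
  ultimately have "multiplicity q m = multiplicity q d + multiplicity q (m div d)"
    using assms(3) by (metis prime_elem_multiplicity_mult_distrib prime_imp_prime_elem)
  thus ?thesis by simp
qed

lemma prime_factors_two_prime_powers:
  fixes q1 q2 a b :: nat
  assumes "prime q1" "prime q2" "q1 \<noteq> q2" "a > 0" "b > 0"
  shows "prime_factors (q1 ^ a * q2 ^ b) = {q1, q2}"
    and "multiplicity q1 (q1 ^ a * q2 ^ b) = a"
    and "multiplicity q2 (q1 ^ a * q2 ^ b) = b"
  using assms
  by (auto simp: prime_factors_product prime_factorization_prime_power
      prime_elem_multiplicity_mult_distrib multiplicity_distinct_prime_power)

lemma prime_square_factors:
  fixes a b p :: nat
  assumes "prime p" "a * b = p ^ 2" "a \<noteq> 1" "b \<noteq> 1"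
  shows "a = p \<and> b = p"
proof -
  have p0: "p > 0" using assms(1) prime_gt_0_nat by blast
  have "a dvd p ^ 2" using assms(2) by (metis dvd_triv_left)
  then obtain i where "i \<le> 2" "a = p ^ i" using divides_primepow_nat[OF assms(1)] by blast
  moreover have "i \<noteq> 0" using \<open>a = p ^ i\<close> assms(3) by auto
  moreover have "i \<noteq> 2" using \<open>a = p ^ i\<close> assms(2,4) p0 by auto
  ultimately have "a = p" by (simp add: numeral_2_eq_2 le_Suc_eq)
  thus ?thesis using assms(2) p0 by (simp add: power2_eq_square)
qed

section \<open>Divisors as exponent vectors\<close>

context
  fixes m :: nat
  assumes m_pos: "m > 0"
begin

definition divisor_of_exponents :: "(nat \<Rightarrow> nat) \<Rightarrow> nat" where
  "divisor_of_exponents f = (\<Prod>q\<in>prime_factors m. q ^ f q)"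

lemma divisor_of_exponents_pos: "divisor_of_exponents f > 0"
  unfolding divisor_of_exponents_def
  by (intro prod_pos) (auto simp: in_prime_factors_iff prime_gt_0_nat)

lemma multiplicity_divisor_of_exponents:
  "prime r \<Longrightarrow> multiplicity r (divisor_of_exponents f) = (if r \<in> prime_factors m then f r else 0)"
  unfolding divisor_of_exponents_def by (rule multiplicity_prod_prime_powers) auto

lemma divisor_of_exponents_multiplicity:
  assumes "d dvd m"
  shows "divisor_of_exponents (\<lambda>q. multiplicity q d) = d"
proof (rule multiplicity_eq_nat[OF divisor_of_exponents_pos])
  show "d > 0" using assms m_pos by (auto intro: Nat.gr0I)
  fix r :: nat assume r: "prime r"
  have "multiplicity r d \<le> multiplicity r m"
    using assms m_pos by (intro dvd_imp_multiplicity_le) auto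
  thus "multiplicity r (divisor_of_exponents (\<lambda>q. multiplicity q d)) = multiplicity r d"
    using r multiplicity_divisor_of_exponents[OF r] by (auto simp: prime_factors_multiplicity)
qed

lemma inj_on_divisor_of_exponents: "inj_on divisor_of_exponents (PiE (prime_factors m) B)"
proof (rule inj_onI)
  fix f g assume f: "f \<in> PiE (prime_factors m) B" and g: "g \<in> PiE (prime_factors m) B"
    and eq: "divisor_of_exponents f = divisor_of_exponents g"
  show "f = g"
  proof (rule PiE_ext[OF f g])
    fix q assume q: "q \<in> prime_factors m"
    hence "prime q" by (auto simp: in_prime_factors_iff)
    thus "f q = g q"
      using multiplicity_divisor_of_exponents[of q f] multiplicity_divisor_of_exponents[of q g] eq q
      by simp
  qed
qed

lemma divisors_with_exponents_eq_image:
  assumes "\<And>q. q \<in> prime_factors m \<Longrightarrow> B q \<subseteq> {..multiplicity q m}"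
  shows "{d. d dvd m \<and> (\<forall>q\<in>prime_factors m. multiplicity q d \<in> B q)}
           = divisor_of_exponents ` PiE (prime_factors m) B"
proof (intro equalityI subsetI)
  fix d assume "d \<in> {d. d dvd m \<and> (\<forall>q\<in>prime_factors m. multiplicity q d \<in> B q)}"
  hence d: "d dvd m" and dB: "\<forall>q\<in>prime_factors m. multiplicity q d \<in> B q" by auto
  have "d = divisor_of_exponents (restrict (\<lambda>q. multiplicity q d) (prime_factors m))"
    using divisor_of_exponents_multiplicity[OF d] unfolding divisor_of_exponents_def by simp
  moreover have "restrict (\<lambda>q. multiplicity q d) (prime_factors m) \<in> PiE (prime_factors m) B"
    using dB by auto
  ultimately show "d \<in> divisor_of_exponents ` PiE (prime_factors m) B" by blast
next
  fix d assume "d \<in> divisor_of_exponents ` PiE (prime_factors m) B"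
  then obtain f where f: "f \<in> PiE (prime_factors m) B" and d: "d = divisor_of_exponents f"
    by blast
  have "f q \<le> multiplicity q m" if "q \<in> prime_factors m" for q
    using f assms[OF that] that by (auto simp: PiE_iff)
  hence "d dvd m"
    unfolding d using divisor_of_exponents_pos multiplicity_divisor_of_exponents m_pos
    by (intro multiplicity_le_imp_dvd) auto
  moreover have "multiplicity q d \<in> B q" if "q \<in> prime_factors m" for q
    using f that multiplicity_divisor_of_exponents[of q f]
    by (auto simp: d PiE_iff in_prime_factors_iff)
  ultimately show "d \<in> {d. d dvd m \<and> (\<forall>q\<in>prime_factors m. multiplicity q d \<in> B q)}"
    by blast
qed

lemma card_divisors_with_exponents:
  assumes "\<And>q. q \<in> prime_factors m \<Longrightarrow> B q \<subseteq> {..multiplicity q m}"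
  shows "card {d. d dvd m \<and> (\<forall>q\<in>prime_factors m. multiplicity q d \<in> B q)}
           = (\<Prod>q\<in>prime_factors m. card (B q))"
proof -
  have "card (divisor_of_exponents ` PiE (prime_factors m) B) = (\<Prod>q\<in>prime_factors m. card (B q))"
    by (simp add: card_image[OF inj_on_divisor_of_exponents] card_PiE)
  thus ?thesis using divisors_with_exponents_eq_image[OF assms] by simp
qed

end

lemma card_divisors_nat:
  fixes m :: nat
  assumes "m > 0"
  shows "card {d. d dvd m} = (\<Prod>q\<in>prime_factors m. multiplicity q m + 1)"
proof -
  have "{d. d dvd m} = {d. d dvd m \<and> (\<forall>q\<in>prime_factors m. multiplicity q d \<in> {..multiplicity q m})}"
    using assms by (auto intro: dvd_imp_multiplicity_le)
  thus ?thesis using card_divisors_with_exponents[OF assms, of "\<lambda>q. {..multiplicity q m}"] by simp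
qed

lemma unitary_divisor_iff_multiplicity:
  fixes m d :: nat
  assumes "m > 0" "d dvd m"
  shows "coprime d (m div d) \<longleftrightarrow> (\<forall>q\<in>prime_factors m. multiplicity q d \<in> {0, multiplicity q m})"
proof -
  have le: "multiplicity q d \<le> multiplicity q m" for q
    using assms by (intro dvd_imp_multiplicity_le) auto
  have nonzero: "d \<noteq> 0" "m div d \<noteq> 0" using assms by (auto elim!: dvdE)
  have "coprime d (m div d) \<longleftrightarrow>
      (\<forall>q. prime q \<longrightarrow> multiplicity q d = 0 \<or> multiplicity q (m div d) = 0)"
    unfolding coprime_iff_prime_factors_disjoint[OF nonzero] prime_factors_multiplicity
    by (auto simp: disjoint_iff)
  also have "\<dots> \<longleftrightarrow> (\<forall>q. prime q \<longrightarrow> multiplicity q d \<in> {0, multiplicity q m})"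
    using multiplicity_div_nat[OF assms] le
    by (metis diff_is_0_eq insertCI insertE le_antisym singletonD)
  also have "\<dots> \<longleftrightarrow> (\<forall>q\<in>prime_factors m. multiplicity q d \<in> {0, multiplicity q m})"
    using le by (auto simp: prime_factors_multiplicity) (metis le_zero_eq neq0_conv)
  finally show ?thesis .
qed

lemma card_unitary_divisors:
  fixes m :: nat
  assumes "m > 0"
  shows "card {d. d dvd m \<and> coprime d (m div d)} = 2 ^ card (prime_factors m)"
proof -
  have "{d. d dvd m \<and> coprime d (m div d)}
      = {d. d dvd m \<and> (\<forall>q\<in>prime_factors m. multiplicity q d \<in> {0, multiplicity q m})}"
    using unitary_divisor_iff_multiplicity[OF assms] by blast
  moreover have "card {0, multiplicity q m} = 2" if "q \<in> prime_factors m" for q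
    using that by (simp add: prime_factors_multiplicity)
  ultimately show ?thesis
    using card_divisors_with_exponents[OF assms, of "\<lambda>q. {0, multiplicity q m}"] by simp
qed

lemma divprod_square:
  fixes m :: nat
  assumes "m > 0"
  shows "divprod m ^ 2 = m ^ (\<Prod>q\<in>prime_factors m. multiplicity q m + 1)"
proof -
  have "divprod m ^ 2 = m ^ card {d. d dvd m}"
    unfolding divprod_def
    by (rule prod_square_eq_power_card) (use assms in \<open>auto simp: finite_divisors_nat elim!: dvdE\<close>)
  thus ?thesis using card_divisors_nat[OF assms] by simp
qed

lemma udivprod_eq_power:
  fixes m :: nat
  assumes "m > 0"
  shows "udivprod m = m ^ 2 ^ (card (prime_factors m) - 1)"
proof (cases "m = 1")
  case True
  hence "{d. d dvd m \<and> coprime d (m div d)} = {1}" by auto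
  thus ?thesis using True by (simp add: udivprod_def)
next
  case False
  have closed: "m div d \<in> {d. d dvd m \<and> coprime d (m div d)}"
    if "d \<in> {d. d dvd m \<and> coprime d (m div d)}" for d
    using that assms by (auto simp: div_div_eq_right coprime_commute)
  have "udivprod m ^ 2 = m ^ card {d. d dvd m \<and> coprime d (m div d)}"
    unfolding udivprod_def
    by (rule prod_square_eq_power_card[OF assms _ _ closed])
       (use assms in \<open>auto intro: finite_subset[OF _ finite_divisors_nat[of m]]\<close>)
  also have "\<dots> = (m ^ 2 ^ (card (prime_factors m) - 1)) ^ 2"
  proof -
    have "prime_factors m \<noteq> {}"
      using assms False by (auto simp: prime_factorization_empty_iff)
    hence "card (prime_factors m) = Suc (card (prime_factors m) - 1)"
      by (simp add: card_gt_0_iff)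
    thus ?thesis
      using card_unitary_divisors[OF assms] by (metis power_Suc2 power_mult)
  qed
  finally show ?thesis using power2_eq_iff_nonneg by blast
qed

lemma divprod_udivprod_eq_power_iff:
  fixes n K :: nat
  assumes "n > 1"
  defines "c \<equiv> 2 ^ (card (prime_factors n) - 1)"
  shows "divprod (udivprod n) = n ^ K \<longleftrightarrow>
           c * (\<Prod>q\<in>prime_factors n. c * multiplicity q n + 1) = 2 * K"
proof -
  have n0: "n > 0" and c0: "c > 0" using assms by auto
  have "(\<Prod>q\<in>prime_factors (n ^ c). multiplicity q (n ^ c) + 1)
      = (\<Prod>q\<in>prime_factors n. c * multiplicity q n + 1)"
    using n0 c0
    by (intro prod.cong) (auto simp: prime_factors_multiplicity prime_elem_multiplicity_power_distrib)
  hence "divprod (udivprod n) ^ 2 = n ^ (c * (\<Prod>q\<in>prime_factors n. c * multiplicity q n + 1))"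
    using divprod_square[of "n ^ c"] n0 by (simp add: udivprod_eq_power c_def power_mult)
  moreover have "divprod (udivprod n) = n ^ K \<longleftrightarrow> divprod (udivprod n) ^ 2 = n ^ (2 * K)"
    by (simp add: power2_eq_iff_nonneg power_mult mult.commute)
  ultimately show ?thesis using power_inject_exp[OF assms(1)] by simp
qed

lemma K_T0Tstar_perfect_prime_power:
  fixes q K :: nat
  assumes "prime q" "K \<ge> 2"
  shows "K_T0Tstar_perfect K (q ^ (2 * K - 1))"
proof -
  have e0: "2 * K - 1 > 0" using assms(2) by simp
  hence "1 < q ^ (2 * K - 1)" using assms(1) prime_gt_1_nat one_less_power by blast
  moreover have "prime_factors (q ^ (2 * K - 1)) = {q}"
    using assms(1) e0 by (simp add: prime_factorization_prime_power)
  ultimately show ?thesis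
    using assms by (simp add: K_T0Tstar_perfect_def divprod_udivprod_eq_power_iff)
qed

lemma K_T0Tstar_perfect_two_prime_powers:
  fixes q1 q2 a b :: nat
  assumes "prime q1" "prime q2" "q1 \<noteq> q2" "a > 0" "b > 0"
  shows "K_T0Tstar_perfect ((2 * a + 1) * (2 * b + 1)) (q1 ^ a * q2 ^ b)"
proof -
  define n where "n = q1 ^ a * q2 ^ b"
  have "1 < q1 ^ a" using assms prime_gt_1_nat one_less_power by blast
  moreover have "q1 ^ a * 1 \<le> n"
    unfolding n_def using prime_gt_0_nat[OF assms(2)] by (intro mult_le_mono2) (simp add: Suc_le_eq)
  ultimately have "1 < n" by simp
  have "card (prime_factors n) = 2"
    using prime_factors_two_prime_powers[OF assms] by (simp add: n_def assms(3))
  hence "2 ^ (card (prime_factors n) - 1) *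
      (\<Prod>q\<in>prime_factors n. 2 ^ (card (prime_factors n) - 1) * multiplicity q n + 1)
      = 2 * ((2 * a + 1) * (2 * b + 1))"
    using prime_factors_two_prime_powers[OF assms] by (simp add: n_def assms(3))
  hence "divprod (udivprod n) = n ^ ((2 * a + 1) * (2 * b + 1))"
    using divprod_udivprod_eq_power_iff[OF \<open>1 < n\<close>] by blast
  moreover have "2 \<le> (2 * a + 1) * (2 * b + 1)" using assms(4) by simp
  ultimately show ?thesis using \<open>1 < n\<close> by (simp add: K_T0Tstar_perfect_def n_def)
qed

lemma prime_square_perfect_cases:
  fixes p n :: nat
  assumes p: "prime p" and perfect: "K_T0Tstar_perfect (p ^ 2) n"
  shows "(\<exists>p1. prime p1 \<and> n = p1 ^ (2 * p^2 - 1))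
          \<or> (odd p \<and> (\<exists>p1 p2. prime p1 \<and> prime p2 \<and> p1 \<noteq> p2 \<and>
                n = p1 ^ ((p - 1) div 2) * p2 ^ ((p - 1) div 2)))"
proof -
  define P where "P = prime_factors n"
  define c :: nat where "c = 2 ^ (card P - 1)"
  define A where "A = (\<Prod>q\<in>P. c * multiplicity q n + 1)"
  have n: "n > 1" using perfect by (simp add: K_T0Tstar_perfect_def)
  have eq: "c * A = 2 * p ^ 2"
    using perfect divprod_udivprod_eq_power_iff[OF n, of "p ^ 2"]
    by (simp add: K_T0Tstar_perfect_def c_def A_def P_def)
  have n_eq_prod: "(\<Prod>q\<in>P. q ^ multiplicity q n) = n"
    using prod_prime_factors[of n] n by (simp add: P_def)
  have P_prime: "prime q" and exp_pos: "multiplicity q n > 0" if "q \<in> P" for q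
    using that by (auto simp: P_def prime_factors_multiplicity)
  have "P \<noteq> {}" using n by (auto simp: P_def prime_factorization_empty_iff)
  hence "card P \<ge> 1" by (simp add: P_def Suc_le_eq card_gt_0_iff)
  then consider "card P = 1" | "card P = 2" | "card P \<ge> 3" by linarith
  thus ?thesis
  proof cases
    case 1
    then obtain q where P: "P = {q}" by (rule card_1_singletonE)
    hence "multiplicity q n = 2 * p ^ 2 - 1"
      using eq 1 by (simp add: c_def A_def)
    hence "n = q ^ (2 * p ^ 2 - 1)" using n_eq_prod P by simp
    moreover have "prime q" using P_prime P by simp
    ultimately show ?thesis by blast
  next
    case 2
    hence "\<exists>x y. P = {x, y} \<and> x \<noteq> y" by (rule card_2_iff[THEN iffD1])
    then obtain q1 q2 where P: "P = {q1, q2}" "q1 \<noteq> q2" by blast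
    have "c = 2" using 2 by (simp add: c_def)
    hence "A = (2 * multiplicity q1 n + 1) * (2 * multiplicity q2 n + 1)"
      using P by (simp add: A_def)
    hence "(2 * multiplicity q1 n + 1) * (2 * multiplicity q2 n + 1) = p ^ 2"
      using eq \<open>c = 2\<close> by simp
    moreover have "2 * multiplicity q1 n + 1 \<noteq> 1" "2 * multiplicity q2 n + 1 \<noteq> 1"
      using exp_pos P by simp_all
    ultimately have "2 * multiplicity q1 n + 1 = p \<and> 2 * multiplicity q2 n + 1 = p"
      by (rule prime_square_factors[OF p])
    hence p1: "p = 2 * multiplicity q1 n + 1" and p2: "p = 2 * multiplicity q2 n + 1"
      by simp_all
    have "multiplicity q1 n = (p - 1) div 2" using p1 by simp
    moreover have "multiplicity q2 n = (p - 1) div 2" using p2 by simp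
    ultimately have "n = q1 ^ ((p - 1) div 2) * q2 ^ ((p - 1) div 2)"
      using n_eq_prod P by simp
    moreover have "odd p" using p1 by simp
    moreover have "prime q1" "prime q2" using P_prime P by simp_all
    ultimately show ?thesis using P(2) by blast
  next
    case 3
    then obtain j where "card P = j + 3" by (metis add.commute le_Suc_ex)
    hence c: "c = 4 * 2 ^ j" by (simp add: c_def power_add)
    hence "2 * (A * 2 ^ j) = p ^ 2" using eq by simp
    hence "2 dvd p ^ 2" by (metis dvd_triv_left)
    hence "2 dvd p" by (rule prime_dvd_power[OF two_is_prime_nat])
    hence "p = 2" using primes_dvd_imp_eq[OF two_is_prime_nat p] by simp
    obtain q where q: "q \<in> P" using \<open>P \<noteq> {}\<close> by blast
    have "c * multiplicity q n + 1 dvd A"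
      unfolding A_def using q by (intro dvd_prodI) (simp_all add: P_def)
    moreover have "A > 0" unfolding A_def by (intro prod_pos) simp
    ultimately have "A \<ge> c * multiplicity q n + 1" by (rule dvd_imp_le)
    moreover have "c * multiplicity q n \<ge> c * 1" using exp_pos[OF q] by (intro mult_le_mono2) simp
    moreover have "c \<ge> 4" using c by simp
    ultimately have "A \<ge> 5" by linarith
    hence "c * A \<ge> 4 * 5" using \<open>c \<ge> 4\<close> by (intro mult_le_mono)
    thus ?thesis using eq \<open>p = 2\<close> by simp
  qed
qed

theorem mainTheorem9:
  fixes p :: nat
  assumes "prime p"
  shows "(\<forall>p1::nat. prime p1 \<longrightarrow> K_T0Tstar_perfect (p^2) (p1 ^ (2 * p^2 - 1)))
    \<and> (odd p \<longrightarrow> (\<forall>p1 p2::nat. prime p1 \<and> prime p2 \<and> p1 \<noteq> p2 \<longrightarrow>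
          K_T0Tstar_perfect (p^2) (p1 ^ ((p - 1) div 2) * p2 ^ ((p - 1) div 2))))
    \<and> (\<forall>n::nat. 1 < n \<and> K_T0Tstar_perfect (p^2) n \<longrightarrow>
          (\<exists>p1. prime p1 \<and> n = p1 ^ (2 * p^2 - 1))
          \<or> (odd p \<and> (\<exists>p1 p2. prime p1 \<and> prime p2 \<and> p1 \<noteq> p2 \<and>
                n = p1 ^ ((p - 1) div 2) * p2 ^ ((p - 1) div 2))))"
proof (intro conjI allI impI)
  have "p \<ge> 2" using assms prime_ge_2_nat by blast
  hence "p * p \<ge> 2 * 1" by (intro mult_le_mono) simp_all
  hence "p ^ 2 \<ge> 2" by (simp add: power2_eq_square)
  thus "K_T0Tstar_perfect (p^2) (p1 ^ (2 * p^2 - 1))" if "prime p1" for p1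
    using K_T0Tstar_perfect_prime_power that by blast
  show "K_T0Tstar_perfect (p^2) (p1 ^ ((p - 1) div 2) * p2 ^ ((p - 1) div 2))"
    if "odd p" and "prime p1 \<and> prime p2 \<and> p1 \<noteq> p2" for p1 p2
  proof -
    have "2 * ((p - 1) div 2) + 1 = p" "(p - 1) div 2 > 0"
      using \<open>odd p\<close> \<open>p \<ge> 2\<close> by presburger+
    thus ?thesis
      using K_T0Tstar_perfect_two_prime_powers[of p1 p2 "(p - 1) div 2" "(p - 1) div 2"] that
      by (simp add: power2_eq_square)
  qed
  show "(\<exists>p1. prime p1 \<and> n = p1 ^ (2 * p^2 - 1))
          \<or> (odd p \<and> (\<exists>p1 p2. prime p1 \<and> prime p2 \<and> p1 \<noteq> p2 \<and>
                n = p1 ^ ((p - 1) div 2) * p2 ^ ((p - 1) div 2)))"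
    if "1 < n \<and> K_T0Tstar_perfect (p^2) n" for n
    using prime_square_perfect_cases[OF assms] that by blast
qed

end
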